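(* Let $G$ be a finite abelian group and let $f$ be an automorphism of $\mathcal{P}_{0}(G)$ with pullback $g$. Then for every nonzero $a\in G$ and every $n\in\mathbb{N}$ we have $\operatorname{ord}(a)=\operatorname{ord}(g(a))$ and $g(na)=ng(a)$.
   Context: For an additively written finite abelian group $G$, $\mathcal{P}_{0}(G)$ is the monoid of all subsets of $G$ containing $0$, with setwise addition and identity $\{0\}$. Every automorphism $f$ of $\mathcal{P}_0(G)$ maps $2$-element sets to $2$-element sets; the pullback of $f$ is the bijection $g:G\to G$ defined by $g(0)=0$ and, for nonzero $a\in G$, by $f(\{0,a\})=\{0,g(a)\}$. $\mathbb{N}$ is the set of positive integers. *)

theory Defs
  imports Main
begin

text \<open>Finite abelian groups are modelled as types of class ab_group_add and finite.\<close>

primrec natmul :: "nat \<Rightarrow> 'a::monoid_add \<Rightarrow> 'a" where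
  "natmul 0 a = 0"
| "natmul (Suc n) a = a + natmul n a"

definition add_ord :: "'a::monoid_add \<Rightarrow> nat" where
  "add_ord a = (LEAST n. 0 < n \<and> natmul n a = 0)"

definition sumset :: "'a::plus set \<Rightarrow> 'a set \<Rightarrow> 'a set" where
  "sumset A B = {a + b | a b. a \<in> A \<and> b \<in> B}"

definition P0 :: "'a::zero set set" where
  "P0 = {A. (0::'a) \<in> A}"

definition is_aut_P0 :: "('a::{plus,zero} set \<Rightarrow> 'a set) \<Rightarrow> bool" where
  "is_aut_P0 f \<longleftrightarrow> bij_betw f P0 P0
     \<and> (\<forall>A\<in>P0. \<forall>B\<in>P0. f (sumset A B) = sumset (f A) (f B))
     \<and> f {0} = {0}"

definition pullback :: "('a::zero set \<Rightarrow> 'a set) \<Rightarrow> 'a \<Rightarrow> 'a" where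
  "pullback f a = (if a = 0 then 0 else (THE b. b \<noteq> 0 \<and> f {0, a} = {0, b}))"

end

theory Submission
  imports Defs
begin

(* An automorphism f of P0(G) commutes with iterated sumsets, so it maps the chain
   {0} <= {0,a} <= {0,a,2a} <= ... onto the chain of iterated sumsets of B = f {0,a}.
   The chain of {0,a} grows by one element per step until it reaches the cyclic group <a>
   after ord a - 1 steps. For an idempotent K in P0(G) there are 2^(|K| - 1) sets X in P0(G)
   with X + K = K, and f preserves this count; so f <a> has ord a elements, while the chain
   of B also grows strictly for ord a - 1 steps, which forces |B| = 2. Comparing the steps
   at which the two chains become stationary gives ord a = ord g(a). Finally, applying f to
   {0,(k+1)a} + {0,a,...,ka} = {0,a,...,(2k+1)a} and using injectivity of g yields
   g((k+1)a) = (k+1)g(a) by strong induction on k. *)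

lemma natmul_add: "natmul (i + j) x = natmul i x + natmul j (x::'a::monoid_add)"
  by (induct i) (simp_all add: add.assoc)

lemma natmul_mult_eq_0: "natmul n (x::'a::monoid_add) = 0 \<Longrightarrow> natmul (q * n) x = 0"
  by (induct q) (simp_all add: natmul_add)

lemma natmul_add_eq_self_iff:
  "natmul (i + k) x = natmul i (x::'a::ab_group_add) \<longleftrightarrow> natmul k x = 0"
  by (simp add: natmul_add)

lemma ex_natmul_eq_0: "\<exists>n>0. natmul n (x::'a::{ab_group_add,finite}) = 0"
proof -
  have "\<not> inj (\<lambda>n. natmul n x)"
    using finite_imageD[of "\<lambda>n. natmul n x" "UNIV :: nat set"] by auto
  then obtain i j where "i < j" "natmul i x = natmul j x"
    unfolding inj_def by (metis linorder_neqE_nat)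
  then have "natmul (j - i) x = 0"
    using natmul_add_eq_self_iff[of i "j - i" x] by simp
  then show ?thesis using \<open>i < j\<close> by (intro exI[of _ "j - i"]) simp
qed

lemma add_ord_pos: "0 < add_ord (x::'a::{ab_group_add,finite})"
  unfolding add_ord_def using LeastI_ex[OF ex_natmul_eq_0[of x]] by blast

lemma natmul_add_ord: "natmul (add_ord x) (x::'a::{ab_group_add,finite}) = 0"
  unfolding add_ord_def using LeastI_ex[OF ex_natmul_eq_0[of x]] by blast

lemma natmul_neq_0_below_add_ord:
  "0 < m \<Longrightarrow> m < add_ord (x::'a::{ab_group_add,finite}) \<Longrightarrow> natmul m x \<noteq> 0"
  unfolding add_ord_def using not_less_Least by blast

lemma inj_on_natmul: "inj_on (\<lambda>j. natmul j x) {..<add_ord (x::'a::{ab_group_add,finite})}"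
proof -
  have "natmul i x \<noteq> natmul j x" if "i < j" "j < add_ord x" for i j
    using natmul_add_eq_self_iff[of i "j - i" x] natmul_neq_0_below_add_ord[of "j - i" x] that
    by simp
  then show ?thesis
    unfolding inj_on_def by (metis lessThan_iff linorder_neqE_nat)
qed

lemma natmul_mod_add_ord: "natmul (k mod add_ord x) x = natmul k (x::'a::{ab_group_add,finite})"
proof -
  have "natmul k x = natmul (k div add_ord x * add_ord x + k mod add_ord x) x" by simp
  also have "\<dots> = natmul (k mod add_ord x) x"
    unfolding natmul_add natmul_mult_eq_0[OF natmul_add_ord] by simp
  finally show ?thesis ..
qed

lemma sumset_iff: "y \<in> sumset A B \<longleftrightarrow> (\<exists>a\<in>A. \<exists>b\<in>B. y = a + b)"
  unfolding sumset_def by blast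

lemma sumset_mono: "A \<subseteq> A' \<Longrightarrow> B \<subseteq> B' \<Longrightarrow> sumset A B \<subseteq> sumset A' B'"
  unfolding subset_iff sumset_iff by blast

lemma subset_sumset_right: "(0::'a::monoid_add) \<in> A \<Longrightarrow> B \<subseteq> sumset A B"
  unfolding subset_iff sumset_iff by (metis add.left_neutral)

lemma subset_sumset_left: "(0::'a::monoid_add) \<in> B \<Longrightarrow> A \<subseteq> sumset A B"
  unfolding subset_iff sumset_iff by (metis add.right_neutral)

lemma sumset_in_P0: "A \<in> P0 \<Longrightarrow> B \<in> P0 \<Longrightarrow> sumset A B \<in> (P0::'a::monoid_add set set)"
  unfolding P0_def using subset_sumset_left by blast

lemma pair_in_P0: "{0, x} \<in> P0"
  unfolding P0_def by simp

primrec sumset_pow :: "nat \<Rightarrow> 'a::{plus,zero} set \<Rightarrow> 'a set" where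
  "sumset_pow 0 A = {0}"
| "sumset_pow (Suc k) A = sumset A (sumset_pow k A)"

lemma sumset_pow_in_P0: "A \<in> P0 \<Longrightarrow> sumset_pow k A \<in> (P0::'a::monoid_add set set)"
  by (induct k) (simp_all add: sumset_in_P0, simp add: P0_def)

lemma sumset_zero_right: "sumset A {0} = (A::'a::monoid_add set)"
  by (auto simp: sumset_iff)

lemma sumset_pow_mono_Suc:
  "A \<in> P0 \<Longrightarrow> sumset_pow k A \<subseteq> sumset_pow (Suc k) (A::'a::monoid_add set)"
  by (simp add: P0_def subset_sumset_right)

lemma sumset_pow_pair: "sumset_pow k {0, x} = (\<lambda>j. natmul j (x::'a::monoid_add)) ` {..k}"
proof (induct k)
  case (Suc k)
  have "sumset {0, x} ((\<lambda>j. natmul j x) ` {..k}) = (\<lambda>j. natmul j x) ` {..Suc k}"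
  proof (intro set_eqI iffI)
    fix y assume "y \<in> sumset {0, x} ((\<lambda>j. natmul j x) ` {..k})"
    then obtain u j where "u \<in> {0, x}" "j \<le> k" "y = u + natmul j x"
      unfolding sumset_iff by blast
    then show "y \<in> (\<lambda>j. natmul j x) ` {..Suc k}"
      by (auto intro: image_eqI[of _ _ j] image_eqI[of _ _ "Suc j"])
  next
    fix y assume "y \<in> (\<lambda>j. natmul j x) ` {..Suc k}"
    then obtain j where "j \<le> Suc k" "y = natmul j x" by auto
    then show "y \<in> sumset {0, x} ((\<lambda>j. natmul j x) ` {..k})"
    proof (cases j)
      case (Suc i)
      then show ?thesis using \<open>j \<le> Suc k\<close> \<open>y = natmul j x\<close>
        unfolding sumset_iff by (intro bexI[of _ x] bexI[of _ "natmul i x"]) auto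
    qed (use \<open>y = natmul j x\<close>
         in \<open>auto simp: sumset_iff intro!: bexI[of _ 0] image_eqI[of _ _ 0]\<close>)
  qed
  then show ?case using Suc by simp
qed simp

lemma sumset_pow_pair_Suc:
  "sumset_pow (Suc k) {0, x} = insert (natmul (Suc k) x) (sumset_pow k {0, (x::'a::monoid_add)})"
  unfolding sumset_pow_pair atMost_Suc image_insert ..

lemma sumset_pow_pair_Suc_eq_iff:
  fixes x :: "'a::{ab_group_add,finite}"
  shows "sumset_pow (Suc k) {0, x} = sumset_pow k {0, x} \<longleftrightarrow> add_ord x \<le> Suc k"
proof
  assume "sumset_pow (Suc k) {0, x} = sumset_pow k {0, x}"
  then have "natmul (Suc k) x \<in> (\<lambda>j. natmul j x) ` {..k}"
    unfolding sumset_pow_pair_Suc sumset_pow_pair by blast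
  then obtain j where j: "j \<le> k" "natmul j x = natmul (Suc k) x" by auto
  show "add_ord x \<le> Suc k"
  proof (rule ccontr)
    assume "\<not> add_ord x \<le> Suc k"
    then have "j = Suc k"
      using j inj_on_natmul[of x] unfolding inj_on_def by simp
    then show False using j by simp
  qed
next
  assume "add_ord x \<le> Suc k"
  then have "Suc k mod add_ord x \<le> k"
    using mod_less_divisor[OF add_ord_pos[of x], of "Suc k"] by linarith
  then have "natmul (Suc k) x \<in> sumset_pow k {0, x}"
    unfolding sumset_pow_pair natmul_mod_add_ord[of "Suc k" x, symmetric] by simp
  then show "sumset_pow (Suc k) {0, x} = sumset_pow k {0, x}"
    unfolding sumset_pow_pair_Suc by blast
qed

lemma card_sumset_pow_pair:
  "k < add_ord x \<Longrightarrow> card (sumset_pow k {0, x}) = Suc k"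
  for x :: "'a::{ab_group_add,finite}"
  unfolding sumset_pow_pair
  by (subst card_image) (auto intro: inj_on_subset[OF inj_on_natmul[of x]])

lemma sumset_pow_pair_add_ord:
  "sumset_pow (add_ord x - 1) {0, x} = range (\<lambda>j. natmul j (x::'a::{ab_group_add,finite}))"
proof -
  have "j mod add_ord x \<le> add_ord x - 1" for j
    using mod_less_divisor[OF add_ord_pos[of x], of j] by linarith
  then have "natmul j x \<in> (\<lambda>j. natmul j x) ` {..add_ord x - 1}" for j
    unfolding natmul_mod_add_ord[of j x, symmetric] by simp
  then show ?thesis unfolding sumset_pow_pair by auto
qed

lemma zero_in_multiples: "0 \<in> range (\<lambda>j. natmul j (x::'a::monoid_add))"
  using rangeI[of "\<lambda>j. natmul j x" 0] by simp

lemma sumset_multiples: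
  fixes x :: "'a::monoid_add"
  defines "M \<equiv> range (\<lambda>j. natmul j x)"
  shows "sumset M M = M"
proof
  show "sumset M M \<subseteq> M"
  proof
    fix y assume "y \<in> sumset M M"
    then obtain i j where "y = natmul i x + natmul j x"
      unfolding sumset_iff M_def by blast
    then have "y = natmul (i + j) x" by (simp add: natmul_add)
    then show "y \<in> M" unfolding M_def by blast
  qed
  show "M \<subseteq> sumset M M"
    unfolding M_def by (rule subset_sumset_left[OF zero_in_multiples])
qed

lemma sumset_pair_sumset_pow_pair:
  fixes x :: "'a::monoid_add"
  shows "sumset {0, natmul (Suc k) x} (sumset_pow k {0, x}) = sumset_pow (Suc (2 * k)) {0, x}"
proof (unfold sumset_pow_pair, intro set_eqI iffI)
  fix y assume "y \<in> sumset {0, natmul (Suc k) x} ((\<lambda>j. natmul j x) ` {..k})"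
  then obtain u j where "u \<in> {0, natmul (Suc k) x}" "j \<le> k" "y = u + natmul j x"
    unfolding sumset_iff by blast
  then have "y = natmul j x \<or> y = natmul (Suc k + j) x"
    by (auto simp: natmul_add add.assoc)
  then show "y \<in> (\<lambda>j. natmul j x) ` {..Suc (2 * k)}"
    using \<open>j \<le> k\<close> by (auto intro: image_eqI[of _ _ "Suc k + j"] simp del: natmul.simps)
next
  fix y assume "y \<in> (\<lambda>j. natmul j x) ` {..Suc (2 * k)}"
  then obtain i where i: "i \<le> Suc (2 * k)" "y = natmul i x" by blast
  show "y \<in> sumset {0, natmul (Suc k) x} ((\<lambda>j. natmul j x) ` {..k})"
  proof (cases "i \<le> k")
    case True
    then show ?thesis unfolding sumset_iff using i
      by (intro bexI[of _ 0] bexI[of _ "natmul i x"]) auto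
  next
    case False
    then have "y = natmul (Suc k) x + natmul (i - Suc k) x"
      using i natmul_add[of "Suc k" "i - Suc k" x] by simp
    then show ?thesis unfolding sumset_iff using i False
      by (intro bexI[of _ "natmul (Suc k) x"] bexI[of _ "natmul (i - Suc k) x"]) auto
  qed
qed

lemma aut_P0_in_P0: "is_aut_P0 f \<Longrightarrow> A \<in> P0 \<Longrightarrow> f A \<in> P0"
  unfolding is_aut_P0_def bij_betw_def by blast

lemma aut_P0_surj: "is_aut_P0 f \<Longrightarrow> B \<in> P0 \<Longrightarrow> \<exists>A\<in>P0. B = f A"
  unfolding is_aut_P0_def bij_betw_def by blast

lemma aut_P0_inj_on: "is_aut_P0 f \<Longrightarrow> inj_on f P0"
  unfolding is_aut_P0_def bij_betw_def by blast

lemma aut_P0_eq_iff: "is_aut_P0 f \<Longrightarrow> A \<in> P0 \<Longrightarrow> B \<in> P0 \<Longrightarrow> f A = f B \<longleftrightarrow> A = B"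
  by (rule inj_on_eq_iff[OF aut_P0_inj_on])

lemma aut_P0_sumset: "is_aut_P0 f \<Longrightarrow> A \<in> P0 \<Longrightarrow> B \<in> P0 \<Longrightarrow> f (sumset A B) = sumset (f A) (f B)"
  unfolding is_aut_P0_def by blast

lemma aut_P0_zero: "is_aut_P0 f \<Longrightarrow> f {0} = {0}"
  unfolding is_aut_P0_def by blast

lemma aut_P0_sumset_pow:
  fixes f :: "'a::monoid_add set \<Rightarrow> 'a set"
  shows "is_aut_P0 f \<Longrightarrow> A \<in> P0 \<Longrightarrow> f (sumset_pow k A) = sumset_pow k (f A)"
  by (induct k) (simp_all add: aut_P0_zero aut_P0_sumset sumset_pow_in_P0)

definition absorbers :: "'a::{plus,zero} set \<Rightarrow> 'a set set" where
  "absorbers K = {X \<in> P0. sumset X K = K}"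

lemma absorbers_idempotent:
  fixes K :: "'a::monoid_add set"
  assumes "0 \<in> K" "sumset K K = K"
  shows "absorbers K = {X. 0 \<in> X \<and> X \<subseteq> K}"
proof (intro set_eqI iffI)
  fix X assume "X \<in> absorbers K"
  then show "X \<in> {X. 0 \<in> X \<and> X \<subseteq> K}"
    using subset_sumset_left[OF assms(1), of X] unfolding absorbers_def P0_def by auto
next
  fix X assume X: "X \<in> {X. 0 \<in> X \<and> X \<subseteq> K}"
  have "sumset X K \<subseteq> K"
    using sumset_mono[of X K K K] X assms(2) by simp
  moreover have "K \<subseteq> sumset X K"
    using subset_sumset_right[of X K] X by simp
  ultimately show "X \<in> absorbers K"
    using X unfolding absorbers_def P0_def by blast
qed

lemma card_absorbers_idempotent:
  fixes K :: "'a::monoid_add set"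
  assumes "finite K" "0 \<in> K" "sumset K K = K"
  shows "card (absorbers K) = 2 ^ (card K - 1)"
proof -
  have "absorbers K = insert 0 ` Pow (K - {0})"
    unfolding absorbers_idempotent[OF assms(2,3)]
  proof (intro set_eqI iffI)
    fix X assume "X \<in> {X. 0 \<in> X \<and> X \<subseteq> K}"
    then show "X \<in> insert 0 ` Pow (K - {0})"
      by (intro image_eqI[of _ _ "X - {0}"]) auto
  qed (use assms(2) in auto)
  moreover have "inj_on (insert 0) (Pow (K - {0}))"
    unfolding inj_on_def by blast
  ultimately have "card (absorbers K) = card (Pow (K - {0}))"
    by (simp add: card_image)
  also have "\<dots> = 2 ^ (card K - 1)"
    using assms(1,2) by (simp add: card_Pow)
  finally show ?thesis .
qed

lemma aut_P0_image_absorbers: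
  fixes f :: "'a::monoid_add set \<Rightarrow> 'a set"
  assumes f: "is_aut_P0 f" and K: "K \<in> P0"
  shows "f ` absorbers K = absorbers (f K)"
proof (intro set_eqI iffI)
  fix Y assume "Y \<in> f ` absorbers K"
  then obtain X where X: "X \<in> P0" "sumset X K = K" and Y: "Y = f X"
    unfolding absorbers_def by auto
  have "sumset Y (f K) = f K"
    using aut_P0_sumset[OF f X(1) K] X(2) Y by simp
  then show "Y \<in> absorbers (f K)"
    using aut_P0_in_P0[OF f X(1)] Y unfolding absorbers_def by simp
next
  fix Y assume Y: "Y \<in> absorbers (f K)"
  then obtain X where X: "X \<in> P0" "Y = f X"
    using aut_P0_surj[OF f] unfolding absorbers_def by auto
  then have "f (sumset X K) = f K"
    using Y aut_P0_sumset[OF f X(1) K] unfolding absorbers_def by simp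
  then have "sumset X K = K"
    using aut_P0_eq_iff[OF f sumset_in_P0[OF X(1) K] K] by simp
  then show "Y \<in> f ` absorbers K"
    using X unfolding absorbers_def by auto
qed

lemma aut_P0_card_idempotent:
  fixes f :: "'a::{monoid_add,finite} set \<Rightarrow> 'a set"
  assumes f: "is_aut_P0 f" and K: "K \<in> P0" "sumset K K = K"
  shows "card (f K) = card K"
proof -
  have fK: "f K \<in> P0" "sumset (f K) (f K) = f K"
    using aut_P0_in_P0[OF f K(1)] aut_P0_sumset[OF f K(1) K(1)] K(2) by simp_all
  have "inj_on f (absorbers K)"
    by (rule inj_on_subset[OF aut_P0_inj_on[OF f]]) (auto simp: absorbers_def)
  then have "card (absorbers (f K)) = card (absorbers K)"
    unfolding aut_P0_image_absorbers[OF f K(1), symmetric] by (rule card_image)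
  then have "(2::nat) ^ (card (f K) - 1) = 2 ^ (card K - 1)"
    using card_absorbers_idempotent[of K] card_absorbers_idempotent[of "f K"] K fK
    unfolding P0_def by simp
  then have "card (f K) - 1 = card K - 1"
    by simp
  moreover have "card (f K) \<noteq> 0" "card K \<noteq> 0"
    using K(1) fK(1) unfolding P0_def by (auto simp: card_eq_0_iff)
  ultimately show ?thesis by linarith
qed

lemma card_sumset_pow_strict_chain:
  fixes B :: "'a::{monoid_add,finite} set"
  assumes B: "0 \<in> B"
    and strict: "\<And>k. k < m \<Longrightarrow> sumset_pow (Suc (Suc k)) B \<noteq> sumset_pow (Suc k) B"
  shows "card B + m \<le> card (sumset_pow (Suc m) B)"
  using strict
proof (induction m)
  case 0
  then show ?case by (simp add: sumset_zero_right)
next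
  case (Suc m)
  have "sumset_pow (Suc m) B \<subset> sumset_pow (Suc (Suc m)) B"
    using sumset_pow_mono_Suc[of B "Suc m"] Suc.prems[of m] B unfolding P0_def by auto
  then have "card (sumset_pow (Suc m) B) < card (sumset_pow (Suc (Suc m)) B)"
    by (simp add: psubset_card_mono)
  then show ?case using Suc by simp
qed

lemma card_sumset_pow_aut_P0_pair:
  fixes f :: "'a::{ab_group_add,finite} set \<Rightarrow> 'a set"
  assumes f: "is_aut_P0 f"
  shows "card (sumset_pow (add_ord a - 1) (f {0, a})) = add_ord a"
proof -
  have "card (sumset_pow (add_ord a - 1) (f {0, a})) = card (f (range (\<lambda>j. natmul j a)))"
    unfolding aut_P0_sumset_pow[OF f pair_in_P0, symmetric] sumset_pow_pair_add_ord ..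
  also have "\<dots> = card (range (\<lambda>j. natmul j a))"
    by (rule aut_P0_card_idempotent[OF f _ sumset_multiples]) (simp add: P0_def zero_in_multiples)
  also have "\<dots> = add_ord a"
    using card_sumset_pow_pair[of "add_ord a - 1" a] add_ord_pos[of a]
    unfolding sumset_pow_pair_add_ord by simp
  finally show ?thesis .
qed

lemma aut_P0_pair:
  fixes f :: "'a::{ab_group_add,finite} set \<Rightarrow> 'a set"
  assumes f: "is_aut_P0 f" and a: "a \<noteq> 0"
  shows "\<exists>b. b \<noteq> 0 \<and> f {0, a} = {0, b}"
proof -
  define N where "N = add_ord a"
  define B where "B = f {0, a}"
  have B: "0 \<in> B"
    using aut_P0_in_P0[OF f pair_in_P0] unfolding B_def P0_def by simp
  have "N \<noteq> 1"
    using natmul_add_ord[of a] a unfolding N_def by auto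
  then have N: "2 \<le> N"
    using add_ord_pos[of a] unfolding N_def by linarith
  have "sumset_pow (Suc (Suc k)) B \<noteq> sumset_pow (Suc k) B" if "k < N - 2" for k
  proof -
    have "sumset_pow (Suc (Suc k)) {0, a} \<noteq> sumset_pow (Suc k) {0, a}"
      using sumset_pow_pair_Suc_eq_iff[of "Suc k" a] that unfolding N_def by simp
    then show ?thesis
      unfolding B_def aut_P0_sumset_pow[OF f pair_in_P0, symmetric]
      using aut_P0_eq_iff[OF f sumset_pow_in_P0 sumset_pow_in_P0, OF pair_in_P0 pair_in_P0]
      by (simp del: sumset_pow.simps)
  qed
  then have "card B + (N - 2) \<le> N"
    using card_sumset_pow_strict_chain[OF B, of "N - 2"] card_sumset_pow_aut_P0_pair[OF f, of a] N
    unfolding B_def N_def by (simp add: Suc_diff_Suc numeral_2_eq_2)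
  then have card_B: "card B \<le> 2"
    using N by linarith
  have "B \<noteq> {0}"
    using aut_P0_eq_iff[OF f pair_in_P0, of "{0}"] aut_P0_zero[OF f] a
    unfolding B_def P0_def by auto
  then obtain b where b: "b \<in> B" "b \<noteq> 0"
    using B by blast
  have "{0, b} = B"
    using card_seteq[of B "{0, b}"] B b card_B by simp
  then show ?thesis
    using b unfolding B_def by blast
qed

lemma aut_P0_pair_pullback:
  fixes f :: "'a::{ab_group_add,finite} set \<Rightarrow> 'a set"
  assumes f: "is_aut_P0 f"
  shows "f {0, a} = {0, pullback f a}"
proof (cases "a = 0")
  case True
  then show ?thesis using aut_P0_zero[OF f] by (simp add: pullback_def)
next
  case False
  then obtain b where b: "b \<noteq> 0" "f {0, a} = {0, b}"
    using aut_P0_pair[OF f] by blast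
  then have "(THE b. b \<noteq> 0 \<and> f {0, a} = {0, b}) = b"
    by (intro the_equality) (auto simp: doubleton_eq_iff)
  then show ?thesis using False b by (simp add: pullback_def)
qed

lemma inj_pullback:
  fixes f :: "'a::{ab_group_add,finite} set \<Rightarrow> 'a set"
  assumes f: "is_aut_P0 f"
  shows "inj (pullback f)"
proof (rule injI)
  fix x y assume "pullback f x = pullback f y"
  then have "f {0, x} = f {0, y}"
    by (simp add: aut_P0_pair_pullback[OF f])
  then have "{0, x} = {0, y}"
    using aut_P0_eq_iff[OF f pair_in_P0 pair_in_P0] by simp
  then show "x = y" by (auto simp: doubleton_eq_iff)
qed

lemma aut_P0_sumset_pow_pair:
  fixes f :: "'a::{ab_group_add,finite} set \<Rightarrow> 'a set"
  assumes f: "is_aut_P0 f"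
  shows "f (sumset_pow k {0, a}) = sumset_pow k {0, pullback f a}"
  using aut_P0_sumset_pow[OF f pair_in_P0] aut_P0_pair_pullback[OF f] by simp

lemma add_ord_pullback:
  fixes f :: "'a::{ab_group_add,finite} set \<Rightarrow> 'a set"
  assumes f: "is_aut_P0 f"
  shows "add_ord (pullback f a) = add_ord a"
proof -
  have "add_ord a \<le> Suc k \<longleftrightarrow> add_ord (pullback f a) \<le> Suc k" for k
  proof -
    have "add_ord a \<le> Suc k \<longleftrightarrow> sumset_pow (Suc k) {0, a} = sumset_pow k {0, a}"
      by (rule sumset_pow_pair_Suc_eq_iff[symmetric])
    also have "\<dots> \<longleftrightarrow> f (sumset_pow (Suc k) {0, a}) = f (sumset_pow k {0, a})"
      by (rule aut_P0_eq_iff[OF f sumset_pow_in_P0 sumset_pow_in_P0, OF pair_in_P0 pair_in_P0, symmetric])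
    also have "\<dots> \<longleftrightarrow> add_ord (pullback f a) \<le> Suc k"
      unfolding aut_P0_sumset_pow_pair[OF f] by (rule sumset_pow_pair_Suc_eq_iff)
    finally show ?thesis .
  qed
  from this[of "add_ord a - 1"] this[of "add_ord (pullback f a) - 1"] show ?thesis
    using add_ord_pos[of a] add_ord_pos[of "pullback f a"] by simp
qed

lemma natmul_Suc_pullback_in_sumset:
  fixes f :: "'a::{ab_group_add,finite} set \<Rightarrow> 'a set"
  assumes f: "is_aut_P0 f"
  shows "natmul (Suc k) (pullback f a)
    \<in> sumset {0, pullback f (natmul (Suc k) a)} (sumset_pow k {0, pullback f a})"
proof -
  have "sumset {0, pullback f (natmul (Suc k) a)} (sumset_pow k {0, pullback f a})
      = f (sumset {0, natmul (Suc k) a} (sumset_pow k {0, a}))"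
    using aut_P0_sumset[OF f pair_in_P0 sumset_pow_in_P0[OF pair_in_P0]]
    unfolding aut_P0_pair_pullback[OF f] aut_P0_sumset_pow_pair[OF f] by simp
  also have "\<dots> = sumset_pow (Suc (2 * k)) {0, pullback f a}"
    unfolding sumset_pair_sumset_pow_pair aut_P0_sumset_pow_pair[OF f] ..
  also have "natmul (Suc k) (pullback f a) \<in> \<dots>"
    unfolding sumset_pow_pair by (intro imageI) simp
  finally show ?thesis .
qed

lemma pullback_natmul_below_add_ord:
  fixes f :: "'a::{ab_group_add,finite} set \<Rightarrow> 'a set"
  assumes f: "is_aut_P0 f"
  shows "j < add_ord a \<Longrightarrow> pullback f (natmul j a) = natmul j (pullback f a)"
proof (induction j rule: less_induct)
  case (less j)
  show ?case
  proof (cases j)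
    case 0
    then show ?thesis by (simp add: pullback_def)
  next
    case (Suc k)
    define b where "b = pullback f a"
    define d where "d = pullback f (natmul j a)"
    have ord_b: "j < add_ord b"
      using less.prems add_ord_pullback[OF f] unfolding b_def by simp
    obtain u i where u: "u \<in> {0, d}" and i: "i \<le> k" and j_b: "natmul j b = u + natmul i b"
      using natmul_Suc_pullback_in_sumset[OF f, of k a]
      unfolding Suc sumset_pow_pair sumset_iff b_def d_def by blast
    have "u \<noteq> 0"
    proof
      assume "u = 0"
      then have "j = i"
        using j_b ord_b i Suc by (intro inj_onD[OF inj_on_natmul[of b]]) auto
      then show False using i Suc by simp
    qed
    then have "natmul (j - i) b + natmul i b = d + natmul i b"
      using j_b u i Suc natmul_add[of "j - i" i b] by simp
    then have d: "d = natmul (j - i) b" by simp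
    show ?thesis
    proof (cases "i = 0")
      case True
      then show ?thesis using d unfolding b_def d_def by simp
    next
      case False
      then have "pullback f (natmul (j - i) a) = pullback f (natmul j a)"
        using less.IH[of "j - i"] less.prems False Suc d unfolding b_def d_def by simp
      then have "natmul (j - i) a = natmul j a"
        using inj_pullback[OF f] unfolding inj_def by blast
      then have "j - i = j"
        using less.prems by (intro inj_onD[OF inj_on_natmul[of a]]) auto
      then show ?thesis using False i Suc by simp
    qed
  qed
qed

lemma pullback_natmul:
  fixes f :: "'a::{ab_group_add,finite} set \<Rightarrow> 'a set"
  assumes f: "is_aut_P0 f"
  shows "pullback f (natmul n a) = natmul n (pullback f a)"
proof -
  have "pullback f (natmul n a) = pullback f (natmul (n mod add_ord a) a)"
    by (simp add: natmul_mod_add_ord)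
  also have "\<dots> = natmul (n mod add_ord a) (pullback f a)"
    by (rule pullback_natmul_below_add_ord[OF f]) (simp add: add_ord_pos)
  also have "\<dots> = natmul n (pullback f a)"
    using natmul_mod_add_ord[of n "pullback f a"] by (simp add: add_ord_pullback[OF f])
  finally show ?thesis .
qed

theorem lemma2p5:
  fixes f :: "'a::{ab_group_add, finite} set \<Rightarrow> 'a set"
  assumes "is_aut_P0 f"
    and "a \<noteq> 0"
    and "0 < n"
  shows "add_ord a = add_ord (pullback f a)
         \<and> pullback f (natmul n a) = natmul n (pullback f a)"
  using add_ord_pullback[OF assms(1)] pullback_natmul[OF assms(1)] by simp

end
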